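(* Let $q$ be a prime power and $\mathcal{L}$ a non-empty set of lines of $\mathrm{PG}(n,q)$ satisfying (Pt), (Pl), (Sd) and (To) (see context). Let $U$ be a $4$-dimensional subspace of $\mathrm{PG}(n,q)$ which contains a pentagon of $\mathcal{L}$. Then: (a) If $P$ is a $(q+1)$-$U$-point and $V$ is a vertex of a pentagon contained in $U$ such that $P\neq V$ and $PV\in\mathcal{L}$, then there exists a pentagon contained in $U$ having both $P$ and $V$ as vertices. (b) Every $(q+1)$-$U$-point is a vertex of a pentagon contained in $U$. (c) Suppose $P,Q,R$ are $(q+1)$-$U$-points with $P\neq Q$, $P\ne R$, and $Q,R\in\pi_P$, and suppose that $R=Q$ or $R\notin PQ$. Then there exists a pentagon contained in $U$ having $P$, $Q$, $R$ as vertices.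
   Context: (Pt): every point of $\mathrm{PG}(n,q)$ lies on $0$ or $q+1$ lines of $\mathcal{L}$. (Pl): every plane contains $0$, $1$ or $q+1$ lines of $\mathcal{L}$. (Sd): every solid ($3$-dimensional subspace) contains $0$, $1$, $q+1$ or $2q+1$ lines of $\mathcal{L}$. (To): $|\mathcal{L}|\le q^5+q^4+q^3+q^2+q+1$. A pentagon of $\mathcal{L}$ is a set of five pairwise distinct points $P_1,\dots,P_5$ such that the lines $P_1P_2,P_2P_3,P_3P_4,P_4P_5,P_5P_1$ belong to $\mathcal{L}$ and are pairwise distinct; it is contained in $U$ if these five lines lie in $U$. A point $P$ is a $(q+1)$-$U$-point if exactly $q+1$ lines of $\mathcal{L}$ pass through $P$ and are contained in $U$. For a point $P$ lying on lines of $\mathcal{L}$, $\pi_P$ denotes the subspace spanned by the $q+1$ lines of $\mathcal{L}$ through $P$ (under these hypotheses this is a plane). *)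

theory Defs
  imports "HOL-Analysis.Analysis"
begin

text \<open>PG(n,q) is modelled as the lattice of linear subspaces of the vector space
  'a^'n over a finite field 'a with CARD('a) = q and CARD('n) = n+1.
  A projective subspace of projective dimension k is a linear subspace of
  vector dimension k+1.\<close>

definition proj_subspace :: "nat \<Rightarrow> ('a::field ^ 'n) set \<Rightarrow> bool" where
  "proj_subspace k S \<longleftrightarrow> vec.subspace S \<and> vec.dim S = k + 1"

abbreviation is_point :: "('a::field ^ 'n) set \<Rightarrow> bool" where
  "is_point S \<equiv> proj_subspace 0 S"
abbreviation is_line :: "('a::field ^ 'n) set \<Rightarrow> bool" where
  "is_line S \<equiv> proj_subspace 1 S"
abbreviation is_plane :: "('a::field ^ 'n) set \<Rightarrow> bool" where
  "is_plane S \<equiv> proj_subspace 2 S"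
abbreviation is_solid :: "('a::field ^ 'n) set \<Rightarrow> bool" where
  "is_solid S \<equiv> proj_subspace 3 S"

definition join :: "('a::field ^ 'n) set \<Rightarrow> ('a ^ 'n) set \<Rightarrow> ('a ^ 'n) set" where
  "join P Q = vec.span (P \<union> Q)"

text \<open>Hypotheses (Pt), (Pl), (Sd), (To) on a set L of lines of PG(n,q).\<close>
definition good_line_set :: "nat \<Rightarrow> ('a::field ^ 'n) set set \<Rightarrow> bool" where
  "good_line_set q L \<longleftrightarrow>
     (\<forall>l\<in>L. is_line l) \<and>
     (\<forall>P. is_point P \<longrightarrow> card {l\<in>L. P \<subseteq> l} \<in> {0, q+1}) \<and>
     (\<forall>E. is_plane E \<longrightarrow> card {l\<in>L. l \<subseteq> E} \<in> {0, 1, q+1}) \<and>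
     (\<forall>S. is_solid S \<longrightarrow> card {l\<in>L. l \<subseteq> S} \<in> {0, 1, q+1, 2*q+1}) \<and>
     card L \<le> q^5 + q^4 + q^3 + q^2 + q + 1"

definition pentagon :: "('a::field ^ 'n) set set \<Rightarrow> (nat \<Rightarrow> ('a ^ 'n) set) \<Rightarrow> bool" where
  "pentagon L P \<longleftrightarrow>
     (\<forall>i<5. is_point (P i)) \<and> inj_on P {..<5} \<and>
     (\<forall>i<5. join (P i) (P (Suc i mod 5)) \<in> L) \<and>
     inj_on (\<lambda>i. join (P i) (P (Suc i mod 5))) {..<5}"

definition pentagon_in :: "('a::field ^ 'n) set set \<Rightarrow> ('a ^ 'n) set \<Rightarrow> (nat \<Rightarrow> ('a ^ 'n) set) \<Rightarrow> bool" where
  "pentagon_in L U P \<longleftrightarrow> pentagon L P \<and> (\<forall>i<5. join (P i) (P (Suc i mod 5)) \<subseteq> U)"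

definition is_vertex :: "('a::field ^ 'n) set \<Rightarrow> (nat \<Rightarrow> ('a ^ 'n) set) \<Rightarrow> bool" where
  "is_vertex X P \<longleftrightarrow> X \<in> P ` {..<5}"

definition qU_point :: "nat \<Rightarrow> ('a::field ^ 'n) set set \<Rightarrow> ('a ^ 'n) set \<Rightarrow> ('a ^ 'n) set \<Rightarrow> bool" where
  "qU_point q L U P \<longleftrightarrow> is_point P \<and> card {l\<in>L. P \<subseteq> l \<and> l \<subseteq> U} = q + 1"

definition pi_of :: "('a::field ^ 'n) set set \<Rightarrow> ('a ^ 'n) set \<Rightarrow> ('a ^ 'n) set" where
  "pi_of L P = vec.span (\<Union>{l\<in>L. P \<subseteq> l})"

end

theory Submission
  imports Defs
begin

text \<open>Call two points adjacent if they span a line of \<open>L\<close>. Counting lines with (Pt), (Pl) and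
  (Sd) shows that the lines of \<open>L\<close> through a point \<open>X\<close> are exactly the lines through \<open>X\<close> in the
  plane \<open>\<pi>\<^sub>X\<close>, that adjacency has no triangles other than collinear triples, and that it has
  no quadrangles: these would put \<open>2q + 2\<close> lines of \<open>L\<close> into a solid. In the 4-space \<open>U\<close> any
  two planes meet, so two non-adjacent \<open>(q+1)\<close>-\<open>U\<close>-points have a common neighbour. Hence if a
  \<open>(q+1)\<close>-\<open>U\<close>-point \<open>P\<close> is adjacent to the vertex \<open>A\<close> of a pentagon \<open>A B C D E\<close> in \<open>U\<close> and
  does not lie on \<open>A E\<close>, a common neighbour \<open>X\<close> of \<open>P\<close> and \<open>D\<close> gives the pentagon
  \<open>A P X D E\<close>. The three statements follow by iterating this replacement, up to rotating and
  reflecting pentagons.\<close>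

section \<open>Joins and dimensions of subspaces\<close>

lemma subspace_eq_if_dim_le:
  fixes S T :: "('a::field ^ 'n) set"
  assumes "vec.subspace S" "vec.subspace T" "S \<subseteq> T" "vec.dim T \<le> vec.dim S"
  shows "S = T"
  using vec.dim_eq_span[OF assms(3,4)] assms(1,2) by (metis vec.span_eq_iff)

lemma dim_less_if_psubset:
  fixes S T :: "('a::field ^ 'n) set"
  assumes "vec.subspace S" "vec.subspace T" "S \<subset> T"
  shows "vec.dim S < vec.dim T"
  using vec.dim_psubset[of S T] assms by (metis vec.span_eq_iff)

lemma proj_subspace_eq_if_subset:
  assumes "proj_subspace k S" "proj_subspace k T" "S \<subseteq> T"
  shows "S = T"
  using assms subspace_eq_if_dim_le[of S T] by (simp add: proj_subspace_def)

lemma subspace_join: "vec.subspace (join A B)"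
  by (simp add: join_def)

lemma join_subset: "vec.subspace T \<Longrightarrow> A \<subseteq> T \<Longrightarrow> B \<subseteq> T \<Longrightarrow> join A B \<subseteq> T"
  by (simp add: join_def vec.span_minimal)

lemma subset_join1: "A \<subseteq> join A B"
  unfolding join_def by (meson le_sup_iff vec.span_superset)

lemma subset_join2: "B \<subseteq> join A B"
  unfolding join_def by (meson le_sup_iff vec.span_superset)

lemma join_commute: "join A B = join B A"
  by (simp add: join_def Un_commute)

lemma dim_join_add_dim_inter:
  fixes A B :: "('a::field ^ 'n) set"
  assumes "vec.subspace A" "vec.subspace B"
  shows "vec.dim (join A B) + vec.dim (A \<inter> B) = vec.dim A + vec.dim B"
proof -
  have "join A B = {x + y |x y. x \<in> A \<and> y \<in> B}"
    using assms by (simp add: join_def vec.span_Un vec.span_eq_iff[THEN iffD2])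
  then show ?thesis
    using vec.dim_sums_Int[OF assms] by simp
qed

lemma dim_join_of_hyperplane:
  fixes A B C :: "('a::field ^ 'n) set"
  assumes "vec.subspace A" "vec.subspace B" "vec.subspace C" "C \<subseteq> A" "C \<subseteq> B"
    and "\<not> A \<subseteq> B" "vec.dim A = vec.dim C + 1"
  shows "vec.dim (join A B) = vec.dim B + 1"
proof -
  have "vec.dim C \<le> vec.dim (A \<inter> B)"
    using assms(4,5) by (intro vec.dim_subset) auto
  moreover have "vec.dim (A \<inter> B) < vec.dim A"
    using assms(1,2,6) by (intro dim_less_if_psubset) (auto simp: vec.subspace_inter)
  ultimately show ?thesis
    using dim_join_add_dim_inter[OF assms(1,2)] assms(7) by linarith
qed

lemma proj_subspace_join:
  assumes "proj_subspace (Suc c) A" "proj_subspace b B" "proj_subspace c C"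
    and "C \<subseteq> A" "C \<subseteq> B" "\<not> A \<subseteq> B"
  shows "proj_subspace (Suc b) (join A B)"
  using dim_join_of_hyperplane[of A B C] assms by (simp add: proj_subspace_def subspace_join)

lemma is_plane_join_lines:
  assumes "is_line l" "is_line m" "l \<noteq> m" "is_point X" "X \<subseteq> l" "X \<subseteq> m"
  shows "is_plane (join l m)"
  using proj_subspace_join[of 0 l 1 m X] proj_subspace_eq_if_subset[of 1 l m] assms
  by (auto simp: numeral_2_eq_2)

lemma is_solid_join_line_plane:
  assumes "is_line l" "is_plane E" "\<not> l \<subseteq> E" "is_point X" "X \<subseteq> l" "X \<subseteq> E"
  shows "is_solid (join l E)"
  using proj_subspace_join[of 0 l 2 E X] assms by (simp add: numeral_3_eq_3)

lemma is_solid_join_planes: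
  assumes "is_plane E" "is_plane F" "E \<noteq> F" "is_line m" "m \<subseteq> E" "m \<subseteq> F"
  shows "is_solid (join E F)"
  using proj_subspace_join[of 1 E 2 F m] proj_subspace_eq_if_subset[of 2 E F] assms
  by (auto simp: numeral_2_eq_2 numeral_3_eq_3)

lemma is_line_join_points:
  assumes "is_point X" "is_point Y" "X \<noteq> Y"
  shows "is_line (join X Y)"
proof -
  have "\<not> X \<subseteq> Y"
    using proj_subspace_eq_if_subset assms by blast
  then have "vec.dim (join X Y) = vec.dim Y + 1"
    using assms by (intro dim_join_of_hyperplane[where C = "{0}"])
      (auto simp: proj_subspace_def vec.subspace_0 vec.subspace_def)
  then show ?thesis
    using assms by (simp add: proj_subspace_def subspace_join)
qed

lemma join_points_eq_line:
  assumes "is_line l" "is_point X" "is_point Y" "X \<noteq> Y" "X \<subseteq> l" "Y \<subseteq> l"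
  shows "join X Y = l"
  using proj_subspace_eq_if_subset[of 1 "join X Y" l] is_line_join_points[OF assms(2-4)]
    join_subset[of l X Y] assms by (simp add: proj_subspace_def)

lemma line_eq_if_in_two_planes:
  assumes "is_plane E" "is_plane F" "E \<noteq> F" "is_line l" "is_line m"
    and "l \<subseteq> E \<inter> F" "m \<subseteq> E \<inter> F"
  shows "l = m"
proof -
  have sEF: "vec.subspace (E \<inter> F)"
    using assms by (simp add: proj_subspace_def vec.subspace_inter)
  have "E \<inter> F \<subset> E"
    using proj_subspace_eq_if_subset[OF assms(1,2)] assms(3) by blast
  then have "vec.dim (E \<inter> F) \<le> 2"
    using dim_less_if_psubset[OF sEF] assms(1) by (fastforce simp: proj_subspace_def)
  then have "l = E \<inter> F" "m = E \<inter> F"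
    using subspace_eq_if_dim_le[OF _ sEF] assms(4-7) by (auto simp: proj_subspace_def)
  then show ?thesis by simp
qed

lemma ex_nonzero_in_inter:
  fixes A B U :: "('a::field ^ 'n) set"
  assumes "vec.subspace A" "vec.subspace B" "vec.subspace U" "A \<subseteq> U" "B \<subseteq> U"
    and "vec.dim U < vec.dim A + vec.dim B"
  obtains v where "v \<in> A" "v \<in> B" "v \<noteq> 0"
proof -
  have "vec.dim (join A B) \<le> vec.dim U"
    using join_subset[OF assms(3-5)] by (rule vec.dim_subset)
  then have "vec.dim (A \<inter> B) \<noteq> 0"
    using dim_join_add_dim_inter[OF assms(1,2)] assms(6) by linarith
  then show ?thesis
    using that by auto
qed

lemma is_point_span_singleton:
  fixes x :: "'a::field ^ 'n"
  assumes "x \<noteq> 0"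
  shows "is_point (vec.span {x})"
  using assms by (simp add: proj_subspace_def vec.dim_span_eq_card_independent)

lemma point_eq_span_singleton:
  fixes X :: "('a::field ^ 'n) set"
  assumes "is_point X"
  obtains x where "x \<noteq> 0" "X = vec.span {x}"
proof -
  have "\<not> X \<subseteq> {0}"
    using assms by (simp add: proj_subspace_def flip: vec.dim_eq_0)
  then obtain x where x: "x \<in> X" "x \<noteq> 0"
    by blast
  have "vec.span {x} = X"
    using proj_subspace_eq_if_subset[OF is_point_span_singleton[OF x(2)] assms] assms x(1)
    by (simp add: proj_subspace_def vec.span_minimal)
  then show ?thesis
    using that x(2) by blast
qed

lemma ex_point_in_inter:
  fixes A B U :: "('a::field ^ 'n) set"
  assumes "vec.subspace A" "vec.subspace B" "vec.subspace U" "A \<subseteq> U" "B \<subseteq> U"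
    and "vec.dim U < vec.dim A + vec.dim B"
  obtains X where "is_point X" "X \<subseteq> A" "X \<subseteq> B"
proof -
  obtain v where "v \<in> A" "v \<in> B" "v \<noteq> 0"
    using ex_nonzero_in_inter[OF assms] .
  then show ?thesis
    using that[of "vec.span {v}"] is_point_span_singleton[of v] assms(1,2)
    by (simp add: vec.span_minimal)
qed

section \<open>Lines through a point of a plane\<close>

lemma line_eq_span_pair:
  fixes u v :: "'a::field ^ 'n"
  assumes "is_line l" "u \<in> l" "v \<in> l" "u \<noteq> 0" "v \<notin> vec.span {u}"
  shows "l = vec.span {u, v}"
proof -
  have "vec.independent {u}"
    using assms(4) by (simp add: vec.independent_insert vec.independent_empty)
  then have "vec.independent {v, u}"
    using assms(5) by (rule vec.independent_insertI[rotated])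
  moreover have "u \<noteq> v"
    using assms(5) vec.span_base by blast
  ultimately have "vec.dim (vec.span {u, v}) = 2"
    using vec.dim_span_eq_card_independent by (fastforce simp: insert_commute)
  moreover have "vec.span {u, v} \<subseteq> l"
    using assms by (simp add: proj_subspace_def vec.span_minimal)
  ultimately show ?thesis
    using subspace_eq_if_dim_le[of "vec.span {u, v}" l] assms(1) by (simp add: proj_subspace_def)
qed

lemma plane_eq_span_triple:
  fixes x :: "'a::field ^ 'n"
  assumes "is_plane P" "x \<in> P" "x \<noteq> 0"
  obtains a b where "vec.independent {x, a, b}" "card {x, a, b} = 3" "P = vec.span {x, a, b}"
proof -
  have sP: "vec.subspace P"
    using assms(1) by (simp add: proj_subspace_def)
  obtain B where B: "{x} \<subseteq> B" "B \<subseteq> P" "vec.independent B" "P \<subseteq> vec.span B"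
    using vec.maximal_independent_subset_extend[of "{x}" P] assms(2,3) by auto
  have "card B = 3"
    using vec.basis_card_eq_dim[OF B(2,4,3)] assms(1) by (simp add: proj_subspace_def)
  then have "card (B - {x}) = 2"
    using B(1) by (simp add: card_Diff_singleton)
  then obtain a b where "B - {x} = {a, b}"
    by (auto simp: card_2_iff)
  then have "B = {x, a, b}"
    using B(1) by blast
  moreover have "P = vec.span B"
    using B(4) vec.span_minimal[OF B(2) sP] by blast
  ultimately show ?thesis
    using that B(3) \<open>card B = 3\<close> by blast
qed

lemma not_in_span_singleton_if_in_span_pair:
  fixes x a b v :: "'a::field ^ 'n"
  assumes "vec.independent {x, a, b}" "card {x, a, b} = 3" "v \<in> vec.span {a, b}" "v \<noteq> 0"
  shows "v \<notin> vec.span {x}"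
proof
  assume "v \<in> vec.span {x}"
  then obtain k where "v = k *s x"
    by (auto simp: vec.span_singleton)
  then have "x = (1 / k) *s v"
    using assms(4) by auto
  then have "x \<in> vec.span {a, b}"
    using assms(3) by (simp add: vec.span_scale)
  moreover have "x \<notin> {a, b}"
    using assms(2) by (auto simp: card_insert_if split: if_splits)
  ultimately show False
    using assms(1) by (simp add: vec.independent_insert)
qed

text \<open>A line through \<open>x\<close> in the plane spanned by \<open>x, a, b\<close> meets the line spanned by
  \<open>a, b\<close>, and a point of the latter has a representative \<open>b\<close> or \<open>a + s b\<close>.\<close>

lemma line_through_in_span_triple:
  fixes x a b :: "'a::field ^ 'n"
  assumes ind: "vec.independent {x, a, b}" "card {x, a, b} = 3"
    and l: "is_line l" "x \<in> l" "l \<subseteq> vec.span {x, a, b}"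
  shows "l = vec.span {x, b} \<or> (\<exists>s. l = vec.span {x, a + s *s b})"
proof -
  have sl: "vec.subspace l"
    using l(1) by (simp add: proj_subspace_def)
  have distinct: "x \<noteq> a" "x \<noteq> b" "a \<noteq> b"
    using ind(2) by (auto simp: card_insert_if split: if_splits)
  have "vec.independent {a, b}"
    using ind(1) vec.independent_mono by blast
  then have dim_ab: "vec.dim (vec.span {a, b}) = 2"
    using vec.dim_span_eq_card_independent distinct by fastforce
  have nonzero: "x \<noteq> 0" "b \<noteq> 0"
    using ind(1) vec.dependent_zero[of "{x, a, b}"] by auto
  have on_l: "l = vec.span {x, v}" if "v \<in> l" "v \<in> vec.span {a, b}" "v \<noteq> 0" for v
    using line_eq_span_pair[OF l(1,2) that(1) nonzero(1)
        not_in_span_singleton_if_in_span_pair[OF ind that(2,3)]] .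
  have sub_ab: "vec.span {a, b} \<subseteq> vec.span {x, a, b}"
    by (rule vec.span_mono) blast
  have "vec.dim (vec.span {x, a, b}) = 3"
    using vec.dim_span_eq_card_independent[OF ind(1)] ind(2) by simp
  then have "vec.dim (vec.span {x, a, b}) < vec.dim l + vec.dim (vec.span {a, b})"
    using l(1) dim_ab by (simp add: proj_subspace_def)
  then obtain w where w: "w \<in> l" "w \<in> vec.span {a, b}" "w \<noteq> 0"
    using ex_nonzero_in_inter[OF sl vec.subspace_span vec.subspace_span l(3) sub_ab] by blast
  then obtain c d where cd: "w = c *s a + d *s b"
    by (auto simp: vec.span_insert vec.span_singleton diff_eq_eq add.commute)
  show ?thesis
  proof (cases "c = 0")
    case True
    then have "d \<noteq> 0" "b = (1 / d) *s w"
      using cd w(3) by auto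
    then have "b \<in> l"
      using w(1) sl by (simp add: vec.subspace_scale)
    then show ?thesis
      using on_l[of b] nonzero(2) by (simp add: vec.span_base)
  next
    case False
    then have "a + (d / c) *s b = (1 / c) *s w"
      using cd by simp
    moreover have "(1 / c) *s w \<in> l" "(1 / c) *s w \<in> vec.span {a, b}" "(1 / c) *s w \<noteq> 0"
      using w sl False by (auto simp: vec.subspace_scale vec.span_scale)
    ultimately have "l = vec.span {x, a + (d / c) *s b}"
      using on_l[of "(1 / c) *s w"] by simp
    then show ?thesis
      by blast
  qed
qed

lemma card_lines_through_in_plane_le:
  fixes P X :: "('a::{field,finite} ^ 'n) set"
  assumes "is_plane P" "is_point X" "X \<subseteq> P"
  shows "card {l. is_line l \<and> X \<subseteq> l \<and> l \<subseteq> P} \<le> CARD('a) + 1"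
proof -
  obtain x where x: "x \<noteq> 0" "X = vec.span {x}"
    using point_eq_span_singleton[OF assms(2)] .
  then have "x \<in> P"
    using assms(3) vec.span_base by blast
  then obtain a b where ab: "vec.independent {x, a, b}" "card {x, a, b} = 3" "P = vec.span {x, a, b}"
    using plane_eq_span_triple[OF assms(1) _ x(1)] by blast
  define f where "f = case_option (vec.span {x, b}) (\<lambda>s. vec.span {x, a + s *s b})"
  have "{l. is_line l \<and> X \<subseteq> l \<and> l \<subseteq> P} \<subseteq> range f"
  proof
    fix l
    assume "l \<in> {l. is_line l \<and> X \<subseteq> l \<and> l \<subseteq> P}"
    then have "is_line l" "x \<in> l" "l \<subseteq> vec.span {x, a, b}"
      using x(2) ab(3) vec.span_base by auto
    then consider "l = vec.span {x, b}" | s where "l = vec.span {x, a + s *s b}"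
      using line_through_in_span_triple[OF ab(1,2)] by blast
    then show "l \<in> range f"
    proof cases
      case 1
      then show ?thesis
        using image_eqI[of l f None] by (simp add: f_def)
    next
      case (2 s)
      then show ?thesis
        using image_eqI[of l f "Some s"] by (simp add: f_def)
    qed
  qed
  then have "card {l. is_line l \<and> X \<subseteq> l \<and> l \<subseteq> P} \<le> card (range f)"
    by (intro card_mono) auto
  also have "\<dots> \<le> CARD('a option)"
    by (rule card_image_le) simp
  finally show ?thesis
    by simp
qed

section \<open>Sets of lines satisfying (Pt), (Pl), (Sd)\<close>

lemma card_union3_ge:
  assumes "finite A" "finite B" "finite C"
    and "card (A \<inter> B) \<le> 1" "card (A \<inter> C) \<le> 1" "card (B \<inter> C) \<le> 1"
  shows "card A + card B + card C \<le> card (A \<union> B \<union> C) + 3"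
proof -
  have "card ((A \<union> B) \<inter> C) \<le> card (A \<inter> C) + card (B \<inter> C)"
    by (metis Int_Un_distrib2 card_Un_le)
  then show ?thesis
    using card_Un_Int[of A B] card_Un_Int[of "A \<union> B" C] assms by simp
qed

lemma two_le_card_field: "2 \<le> CARD('a::{field,finite})"
proof -
  have "card {0::'a, 1} \<le> CARD('a)"
    by (rule card_mono) auto
  then show ?thesis
    by simp
qed

definition lines_through :: "('a::field ^ 'n) set set \<Rightarrow> ('a ^ 'n) set \<Rightarrow> ('a ^ 'n) set set" where
  "lines_through L X = {l\<in>L. X \<subseteq> l}"

definition adjacent :: "('a::field ^ 'n) set set \<Rightarrow> ('a ^ 'n) set \<Rightarrow> ('a ^ 'n) set \<Rightarrow> bool" where
  "adjacent L X Y \<longleftrightarrow> is_point X \<and> is_point Y \<and> X \<noteq> Y \<and> join X Y \<in> L"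

lemma adjacent_commute: "adjacent L X Y \<longleftrightarrow> adjacent L Y X"
  unfolding adjacent_def by (auto simp: join_commute)

lemma adjacent_sym: "adjacent L X Y \<Longrightarrow> adjacent L Y X"
  by (simp add: adjacent_commute)

lemma join_mem_lines_through_if_adjacent: "adjacent L X Y \<Longrightarrow> join X Y \<in> lines_through L X"
  by (simp add: adjacent_def lines_through_def subset_join1)

locale good_lines =
  fixes L :: "('a::{field,finite} ^ 'n) set set" and q :: nat
  assumes q_eq: "q = CARD('a)" and good: "good_line_set q L"
begin

lemma is_line_if_mem: "l \<in> L \<Longrightarrow> is_line l"
  using good by (simp add: good_line_set_def)

lemma q_ge_2: "2 \<le> q"
  using two_le_card_field q_eq by simp

lemma card_lines_through:
  assumes "is_point X" "lines_through L X \<noteq> {}"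
  shows "card (lines_through L X) = q + 1"
  using good assms by (auto simp: good_line_set_def lines_through_def)

lemma card_lines_in_plane:
  assumes "is_plane E" "l \<in> L" "m \<in> L" "l \<noteq> m" "l \<subseteq> E" "m \<subseteq> E"
  shows "card {l\<in>L. l \<subseteq> E} = q + 1"
proof -
  have "card {l, m} \<le> card {l\<in>L. l \<subseteq> E}"
    using assms by (intro card_mono) auto
  moreover have "card {l\<in>L. l \<subseteq> E} \<in> {0, 1, q + 1}"
    using good assms(1) by (simp add: good_line_set_def)
  ultimately show ?thesis
    using assms(4) by (auto simp del: card_0_eq)
qed

lemma card_lines_in_solid_le:
  assumes "is_solid S"
  shows "card {l\<in>L. l \<subseteq> S} \<le> 2 * q + 1"
proof -
  have "card {l\<in>L. l \<subseteq> S} \<in> {0, 1, q + 1, 2 * q + 1}"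
    using good assms by (simp add: good_line_set_def)
  then show ?thesis
    by (auto simp del: card_0_eq)
qed

lemma card_common_lines_le:
  assumes "is_plane E" "is_plane F" "E \<noteq> F"
  shows "card ({l\<in>L. l \<subseteq> E} \<inter> {l\<in>L. l \<subseteq> F}) \<le> 1"
  using line_eq_if_in_two_planes[OF assms] is_line_if_mem by (auto simp: card_le_Suc0_iff_eq)

text \<open>Pairwise sharing at most one line, the three planes contribute at least
  \<open>3q > 2q + 1\<close> lines of \<open>L\<close> to the solid.\<close>

lemma not_three_full_planes_in_solid:
  assumes S: "is_solid S" and planes: "is_plane E1" "is_plane E2" "is_plane E3"
    and distinct: "E1 \<noteq> E2" "E1 \<noteq> E3" "E2 \<noteq> E3" and in_S: "E1 \<subseteq> S" "E2 \<subseteq> S" "E3 \<subseteq> S"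
    and full: "card {l\<in>L. l \<subseteq> E1} = q + 1" "card {l\<in>L. l \<subseteq> E2} = q + 1"
      "card {l\<in>L. l \<subseteq> E3} = q + 1"
  shows False
proof -
  let ?A = "\<lambda>E. {l\<in>L. l \<subseteq> E}"
  have "card (?A E1 \<union> ?A E2 \<union> ?A E3) \<le> card (?A S)"
    using in_S by (intro card_mono) auto
  moreover have "card (?A E1 \<inter> ?A E2) \<le> 1" "card (?A E1 \<inter> ?A E3) \<le> 1"
    "card (?A E2 \<inter> ?A E3) \<le> 1"
    using card_common_lines_le planes distinct by blast+
  ultimately show False
    using card_union3_ge[of "?A E1" "?A E2" "?A E3"] card_lines_in_solid_le[OF S] full q_ge_2
    by simp
qed

text \<open>Otherwise the planes spanned by pairs of the three lines are distinct and lie in a solid.\<close>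

lemma lines_through_coplanar:
  assumes X: "is_point X" and l: "l1 \<in> lines_through L X" "l2 \<in> lines_through L X"
    "l3 \<in> lines_through L X" "l1 \<noteq> l2"
  shows "l3 \<subseteq> join l1 l2"
proof (rule ccontr)
  assume l3: "\<not> l3 \<subseteq> join l1 l2"
  have inL: "l1 \<in> L" "l2 \<in> L" "l3 \<in> L"
    using l by (auto simp: lines_through_def)
  then have lines: "is_line l1" "is_line l2" "is_line l3"
    using is_line_if_mem by auto
  have through: "X \<subseteq> l1" "X \<subseteq> l2" "X \<subseteq> l3"
    using l by (auto simp: lines_through_def)
  have ne: "l1 \<noteq> l3" "l2 \<noteq> l3"
    using l3 subset_join1 subset_join2 by blast+
  define E12 E13 E23 where "E12 = join l1 l2" and "E13 = join l1 l3" and "E23 = join l2 l3"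
  have planes: "is_plane E12" "is_plane E13" "is_plane E23"
    unfolding E12_def E13_def E23_def
    using is_plane_join_lines lines through l(4) ne X by blast+
  have X_E12: "X \<subseteq> E12"
    unfolding E12_def using through subset_join1 by blast
  define S where "S = join l3 E12"
  have S: "is_solid S"
    unfolding S_def using is_solid_join_line_plane[OF lines(3) planes(1) _ X through(3) X_E12] l3 E12_def
    by simp
  have "l1 \<subseteq> S" "l2 \<subseteq> S" "l3 \<subseteq> S"
    unfolding S_def E12_def by (meson subset_join1 subset_join2 order_trans)+
  then have in_S: "E12 \<subseteq> S" "E13 \<subseteq> S" "E23 \<subseteq> S"
    unfolding E12_def E13_def E23_def by (simp_all add: join_subset S_def subspace_join)
  have "l3 \<subseteq> E13" "l3 \<subseteq> E23"
    unfolding E13_def E23_def by (simp_all add: subset_join2)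
  then have distinct12: "E12 \<noteq> E13" "E12 \<noteq> E23"
    using l3 unfolding E12_def by blast+
  have "E13 \<noteq> E23"
  proof
    assume "E13 = E23"
    then have "E12 \<subseteq> E13"
      unfolding E12_def using join_subset[of E13 l1 l2] planes(2) subset_join1[of l1 l3]
        subset_join1[of l2 l3] by (simp add: proj_subspace_def E13_def E23_def)
    then show False
      using proj_subspace_eq_if_subset[OF planes(1,2)] distinct12 by blast
  qed
  moreover have "card {l\<in>L. l \<subseteq> E12} = q + 1"
    by (rule card_lines_in_plane[OF planes(1) inL(1,2) l(4)])
      (simp_all add: E12_def subset_join1 subset_join2)
  moreover have "card {l\<in>L. l \<subseteq> E13} = q + 1"
    by (rule card_lines_in_plane[OF planes(2) inL(1,3) ne(1)])
      (simp_all add: E13_def subset_join1 subset_join2)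
  moreover have "card {l\<in>L. l \<subseteq> E23} = q + 1"
    by (rule card_lines_in_plane[OF planes(3) inL(2,3) ne(2)])
      (simp_all add: E23_def subset_join1 subset_join2)
  ultimately show False
    using not_three_full_planes_in_solid[OF S planes distinct12] in_S by blast
qed

lemma two_lines_through:
  assumes "is_point X" "lines_through L X \<noteq> {}"
  obtains l m where "l \<in> lines_through L X" "m \<in> lines_through L X" "l \<noteq> m"
proof -
  have "2 \<le> card (lines_through L X)"
    using card_lines_through[OF assms] q_ge_2 by simp
  then show ?thesis
    using that by (auto simp: card_le_Suc0_iff_eq not_less_eq_eq[symmetric] numeral_2_eq_2)
qed

lemma pi_of_eq_join:
  assumes X: "is_point X" and l: "l \<in> lines_through L X" "m \<in> lines_through L X" "l \<noteq> m"
  shows "pi_of L X = join l m"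
proof
  have "\<Union>(lines_through L X) \<subseteq> join l m"
    using lines_through_coplanar[OF X l(1,2) _ l(3)] by blast
  then show "pi_of L X \<subseteq> join l m"
    unfolding pi_of_def lines_through_def by (intro vec.span_minimal) (simp_all add: subspace_join)
  have "l \<union> m \<subseteq> \<Union>(lines_through L X)"
    using l(1,2) by blast
  then show "join l m \<subseteq> pi_of L X"
    unfolding pi_of_def join_def lines_through_def by (rule vec.span_mono)
qed

lemma is_plane_pi_of:
  assumes "is_point X" "lines_through L X \<noteq> {}"
  shows "is_plane (pi_of L X)"
proof -
  obtain l m where l: "l \<in> lines_through L X" "m \<in> lines_through L X" "l \<noteq> m"
    using two_lines_through[OF assms] .
  then have "is_plane (join l m)"
    using is_plane_join_lines[of l m X] is_line_if_mem assms(1) by (simp add: lines_through_def)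
  then show ?thesis
    using pi_of_eq_join[OF assms(1) l] by simp
qed

lemma lines_through_subset_pi_of:
  assumes "l \<in> lines_through L X"
  shows "l \<subseteq> pi_of L X"
proof -
  have "l \<subseteq> \<Union>{l\<in>L. X \<subseteq> l}"
    using assms by (auto simp: lines_through_def)
  then show ?thesis
    unfolding pi_of_def using vec.span_superset by (rule order_trans)
qed

lemma point_subset_pi_of:
  assumes "lines_through L X \<noteq> {}"
  shows "X \<subseteq> pi_of L X"
proof -
  obtain l where "l \<in> lines_through L X"
    using assms by blast
  then show ?thesis
    using lines_through_subset_pi_of[of l X] by (auto simp: lines_through_def)
qed

text \<open>Both sides have \<open>q + 1\<close> elements: the right one by (Pt), the left one by (Pl),
  since \<open>pi_of L X\<close> contains at least two lines of \<open>L\<close>.\<close>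

lemma lines_in_pi_of:
  assumes "is_point X" "lines_through L X \<noteq> {}"
  shows "{l\<in>L. l \<subseteq> pi_of L X} = lines_through L X"
proof -
  have sub: "lines_through L X \<subseteq> {l\<in>L. l \<subseteq> pi_of L X}"
    using lines_through_subset_pi_of by (auto simp: lines_through_def)
  obtain l m where lm: "l \<in> lines_through L X" "m \<in> lines_through L X" "l \<noteq> m"
    using two_lines_through[OF assms] .
  have "card {l\<in>L. l \<subseteq> pi_of L X} = q + 1"
    by (rule card_lines_in_plane[OF is_plane_pi_of[OF assms] _ _ lm(3)])
      (use lm lines_through_subset_pi_of in \<open>auto simp: lines_through_def\<close>)
  then show ?thesis
    using card_subset_eq[OF _ sub] card_lines_through[OF assms] by simp
qed

text \<open>The \<open>q + 1\<close> lines of \<open>L\<close> through \<open>X\<close> exhaust all lines through \<open>X\<close> in the plane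
  \<open>pi_of L X\<close>.\<close>

lemma adjacent_if_in_pi_of:
  assumes X: "is_point X" "lines_through L X \<noteq> {}"
    and Y: "is_point Y" "Y \<subseteq> pi_of L X" "Y \<noteq> X"
  shows "adjacent L X Y"
proof -
  define T where "T = {l. is_line l \<and> X \<subseteq> l \<and> l \<subseteq> pi_of L X}"
  have sub: "lines_through L X \<subseteq> T"
    unfolding T_def using lines_through_subset_pi_of is_line_if_mem by (auto simp: lines_through_def)
  have "card T \<le> q + 1"
    unfolding T_def q_eq
    using card_lines_through_in_plane_le[OF is_plane_pi_of[OF X] X(1) point_subset_pi_of[OF X(2)]] .
  then have "lines_through L X = T"
    using card_subset_eq[OF _ sub] card_lines_through[OF X] card_mono[OF _ sub] by simp
  moreover have "join X Y \<in> T"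
    unfolding T_def using is_line_join_points[OF X(1) Y(1)] Y(2,3) subset_join1
      join_subset[of "pi_of L X" X Y] point_subset_pi_of[OF X(2)] is_plane_pi_of[OF X]
    by (auto simp: proj_subspace_def)
  ultimately show ?thesis
    using X(1) Y(1,3) by (auto simp: adjacent_def lines_through_def)
qed

lemma lines_through_nonempty_if_adjacent: "adjacent L X Y \<Longrightarrow> lines_through L X \<noteq> {}"
  using join_mem_lines_through_if_adjacent by blast

lemma in_pi_of_if_adjacent: "adjacent L X Y \<Longrightarrow> Y \<subseteq> pi_of L X"
  using join_mem_lines_through_if_adjacent lines_through_subset_pi_of subset_join2 by blast

lemma adjacent_if_on_line:
  assumes "adjacent L Y Z" "is_point X" "X \<subseteq> join Y Z" "X \<noteq> Y"
  shows "adjacent L X Y"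
proof -
  have "is_line (join Y Z)"
    using assms(1) is_line_if_mem by (simp add: adjacent_def)
  then have "join X Y = join Y Z"
    using join_points_eq_line[of "join Y Z" X Y] assms subset_join1 by (auto simp: adjacent_def)
  then show ?thesis
    using assms by (auto simp: adjacent_def)
qed

lemma adjacent_triangle_collinear:
  assumes "adjacent L X Y" "adjacent L Y Z" "adjacent L X Z"
  shows "X \<subseteq> join Y Z"
proof -
  have X: "is_point X" "lines_through L X \<noteq> {}"
    using assms(1) lines_through_nonempty_if_adjacent by (auto simp: adjacent_def)
  have "join Y Z \<subseteq> pi_of L X"
    using join_subset[of "pi_of L X" Y Z] in_pi_of_if_adjacent assms(1,3) is_plane_pi_of[OF X]
    by (simp add: proj_subspace_def)
  then have "join Y Z \<in> lines_through L X"
    using lines_in_pi_of[OF X] assms(2) by (auto simp: adjacent_def)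
  then show ?thesis
    by (simp add: lines_through_def)
qed

lemma join_eq_if_adjacent_triangle:
  assumes "adjacent L X Y" "adjacent L Y Z" "adjacent L X Z"
  shows "join X Y = join Y Z"
  using join_points_eq_line[of "join Y Z" X Y] adjacent_triangle_collinear[OF assms]
    is_line_if_mem assms(1,2) subset_join1[of Y Z] by (simp add: adjacent_def)

lemma lines_through_disjoint_if_not_adjacent:
  assumes "is_point X" "is_point Y" "X \<noteq> Y" "\<not> adjacent L X Y"
  shows "lines_through L X \<inter> lines_through L Y = {}"
proof (rule ccontr)
  assume "lines_through L X \<inter> lines_through L Y \<noteq> {}"
  then obtain l where l: "l \<in> L" "X \<subseteq> l" "Y \<subseteq> l"
    by (auto simp: lines_through_def)
  then have "join X Y = l"
    using join_points_eq_line[OF is_line_if_mem[OF l(1)] assms(1-3)] by simp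
  then show False
    using assms l(1) by (simp add: adjacent_def)
qed

text \<open>Otherwise the planes \<open>pi_of L X1\<close> and \<open>pi_of L X3\<close> share the line
  \<open>X2 X4\<close>, so they span a solid containing the \<open>2q + 2\<close> lines of \<open>L\<close> through \<open>X1\<close> or \<open>X3\<close>.\<close>

lemma no_quadrangle:
  assumes a: "adjacent L X1 X2" "adjacent L X2 X3" "adjacent L X3 X4" "adjacent L X4 X1"
    and d: "X1 \<noteq> X3" "X2 \<noteq> X4" and n: "\<not> adjacent L X1 X3"
  shows False
proof -
  have X1: "is_point X1" "lines_through L X1 \<noteq> {}" and X3: "is_point X3" "lines_through L X3 \<noteq> {}"
    using a lines_through_nonempty_if_adjacent by (auto simp: adjacent_def)
  define P1 P3 where "P1 = pi_of L X1" and "P3 = pi_of L X3"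
  have planes: "is_plane P1" "is_plane P3"
    unfolding P1_def P3_def using is_plane_pi_of X1 X3 by auto
  have "X2 \<subseteq> P1" "X4 \<subseteq> P1" "X2 \<subseteq> P3" "X4 \<subseteq> P3"
    unfolding P1_def P3_def using in_pi_of_if_adjacent a adjacent_sym by blast+
  then have in_both: "join X2 X4 \<subseteq> P1" "join X2 X4 \<subseteq> P3"
    using planes join_subset[of P1 X2 X4] join_subset[of P3 X2 X4] by (simp_all add: proj_subspace_def)
  have line: "is_line (join X2 X4)"
    using is_line_join_points d(2) a by (auto simp: adjacent_def)
  have "P1 \<noteq> P3"
    using adjacent_if_in_pi_of[OF X1 X3(1)] point_subset_pi_of[OF X3(2)] d(1) n
    unfolding P1_def P3_def by auto
  then have S: "is_solid (join P1 P3)"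
    using is_solid_join_planes[OF planes _ line in_both] by simp
  have "lines_through L X1 \<union> lines_through L X3 \<subseteq> {l\<in>L. l \<subseteq> join P1 P3}"
  proof
    fix l
    assume "l \<in> lines_through L X1 \<union> lines_through L X3"
    then have "l \<in> L" "l \<subseteq> P1 \<or> l \<subseteq> P3"
      unfolding P1_def P3_def using lines_through_subset_pi_of by (auto simp: lines_through_def)
    then show "l \<in> {l\<in>L. l \<subseteq> join P1 P3}"
      using subset_join1[of P1 P3] subset_join2[of P3 P1] by auto
  qed
  then have "card (lines_through L X1 \<union> lines_through L X3) \<le> card {l\<in>L. l \<subseteq> join P1 P3}"
    by (rule card_mono[rotated]) simp
  then have "card (lines_through L X1 \<union> lines_through L X3) \<le> 2 * q + 1"
    using card_lines_in_solid_le[OF S] by linarith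
  moreover have "lines_through L X1 \<inter> lines_through L X3 = {}"
    using lines_through_disjoint_if_not_adjacent[OF X1(1) X3(1) d(1) n] .
  ultimately show False
    using card_Un_disjoint[of "lines_through L X1" "lines_through L X3"]
      card_lines_through X1 X3 by simp
qed

text \<open>Either adjacency would close a quadrangle \<open>P X E A\<close> or \<open>X A E D\<close>.\<close>

lemma quadrangle_chords_not_adjacent:
  assumes PA: "adjacent L P A" and AE: "adjacent L A E" and ED: "adjacent L E D"
    and PX: "adjacent L P X" and DX: "adjacent L D X"
    and PE: "\<not> adjacent L P E" "P \<noteq> E" and "A \<noteq> D" "A \<noteq> X" "X \<noteq> E"
  shows "\<not> adjacent L X E" "\<not> adjacent L A X"
proof -
  show XE: "\<not> adjacent L X E"
  proof
    assume "adjacent L X E"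
    then show False
      using no_quadrangle[OF PX _ adjacent_sym[OF AE] adjacent_sym[OF PA] PE(2)] assms(9) PE(1)
      by blast
  qed
  show "\<not> adjacent L A X"
  proof
    assume "adjacent L A X"
    then show False
      using no_quadrangle[OF adjacent_sym _ ED DX assms(10,8) XE] AE by blast
  qed
qed

lemma qU_point_iff:
  "qU_point q L U X \<longleftrightarrow> is_point X \<and> lines_through L X \<noteq> {} \<and> (\<forall>l\<in>lines_through L X. l \<subseteq> U)"
proof (cases "is_point X")
  case True
  have sub: "{l\<in>L. X \<subseteq> l \<and> l \<subseteq> U} \<subseteq> lines_through L X"
    by (auto simp: lines_through_def)
  have fin: "finite (lines_through L X)"
    by simp
  show ?thesis
  proof
    assume "qU_point q L U X"
    then have card: "card {l\<in>L. X \<subseteq> l \<and> l \<subseteq> U} = q + 1"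
      by (simp add: qU_point_def)
    then have "{l\<in>L. X \<subseteq> l \<and> l \<subseteq> U} \<noteq> {}"
      by (metis card.empty add_is_0 one_neq_zero)
    then have ne: "lines_through L X \<noteq> {}"
      using sub by blast
    then have "{l\<in>L. X \<subseteq> l \<and> l \<subseteq> U} = lines_through L X"
      using card_subset_eq[OF fin sub] card card_lines_through[OF True] by simp
    then show "is_point X \<and> lines_through L X \<noteq> {} \<and> (\<forall>l\<in>lines_through L X. l \<subseteq> U)"
      using True ne by blast
  next
    assume "is_point X \<and> lines_through L X \<noteq> {} \<and> (\<forall>l\<in>lines_through L X. l \<subseteq> U)"
    then have "{l\<in>L. X \<subseteq> l \<and> l \<subseteq> U} = lines_through L X"
      "card (lines_through L X) = q + 1"
      using card_lines_through[OF True] unfolding lines_through_def by blast+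
    then show "qU_point q L U X"
      using True by (simp add: qU_point_def)
  qed
qed (simp add: qU_point_def)

lemma qU_point_if_two_lines:
  assumes "vec.subspace U" "is_point X" "l \<in> lines_through L X" "m \<in> lines_through L X" "l \<noteq> m"
    and "l \<subseteq> U" "m \<subseteq> U"
  shows "qU_point q L U X"
  using lines_through_coplanar[OF assms(2-4) _ assms(5)] join_subset[OF assms(1,6,7)] assms(2,3)
  unfolding qU_point_iff by blast

lemma join_subset_if_qU_point: "qU_point q L U X \<Longrightarrow> adjacent L X Y \<Longrightarrow> join X Y \<subseteq> U"
  using join_mem_lines_through_if_adjacent[of L X Y] unfolding qU_point_iff by blast

lemma pi_of_subset_if_qU_point:
  assumes "vec.subspace U" "qU_point q L U X"
  shows "pi_of L X \<subseteq> U"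
  unfolding pi_of_def using assms by (intro vec.span_minimal) (auto simp: qU_point_iff lines_through_def)

lemma qU_point_if_common_neighbour:
  assumes U: "vec.subspace U" and P: "qU_point q L U P" and Q: "qU_point q L U Q"
    and PQ: "P \<noteq> Q" "\<not> adjacent L P Q" and X: "adjacent L P X" "adjacent L Q X"
  shows "qU_point q L U X"
proof -
  note XP = adjacent_sym[OF X(1)] and XQ = adjacent_sym[OF X(2)]
  have "join X P \<noteq> join X Q"
  proof
    assume "join X P = join X Q"
    then have "Q \<subseteq> join P X"
      using subset_join2[of Q X] join_commute[of X P] by simp
    moreover have "is_point Q"
      using X(2) by (simp add: adjacent_def)
    ultimately have "adjacent L Q P"
      using adjacent_if_on_line[OF X(1)] PQ(1) by simp
    then show False
      using adjacent_sym PQ(2) by blast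
  qed
  moreover have "join X P \<subseteq> U" "join X Q \<subseteq> U"
    using join_subset_if_qU_point[OF P X(1)] join_subset_if_qU_point[OF Q X(2)] join_commute
    by metis+
  moreover have "is_point X"
    using X(1) by (simp add: adjacent_def)
  ultimately show ?thesis
    using qU_point_if_two_lines[OF U _ join_mem_lines_through_if_adjacent[OF XP]
        join_mem_lines_through_if_adjacent[OF XQ]] by simp
qed

end

section \<open>Pentagons as 5-tuples\<close>

lemma lessThan_5: "{..<5} = {0, 1, 2, 3, 4::nat}"
  by (auto simp: less_Suc_eq eval_nat_numeral)

lemma all_less_5: "(\<forall>i<5. P i) \<longleftrightarrow> P 0 \<and> P 1 \<and> P 2 \<and> P 3 \<and> P (4::nat)"
  by (auto simp: less_Suc_eq eval_nat_numeral)

lemma is_vertex_iff: "is_vertex X F \<longleftrightarrow> X \<in> {F 0, F 1, F 2, F 3, F 4}"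
  by (auto simp: is_vertex_def lessThan_5)

text \<open>Non-adjacency of the diagonals is built in; for a pentagon of \<open>L\<close> it follows from the
  distinctness of the sides (see \<open>pentagon_vertices_of_pentagon_in\<close>).\<close>

definition pentagon_vertices ::
    "('a::field ^ 'n) set set \<Rightarrow> ('a ^ 'n) set \<Rightarrow> ('a ^ 'n) set \<Rightarrow> ('a ^ 'n) set \<Rightarrow> ('a ^ 'n) set
      \<Rightarrow> ('a ^ 'n) set \<Rightarrow> ('a ^ 'n) set \<Rightarrow> bool" where
  "pentagon_vertices L U A B C D E \<longleftrightarrow> distinct [A, B, C, D, E] \<and>
     adjacent L A B \<and> adjacent L B C \<and> adjacent L C D \<and> adjacent L D E \<and> adjacent L E A \<and>
     \<not> adjacent L A C \<and> \<not> adjacent L A D \<and> \<not> adjacent L B D \<and> \<not> adjacent L B E \<and>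
     \<not> adjacent L C E \<and>
     join A B \<subseteq> U \<and> join B C \<subseteq> U \<and> join C D \<subseteq> U \<and> join D E \<subseteq> U \<and> join E A \<subseteq> U"

lemma pentagon_vertices_rotate:
  "pentagon_vertices L U A B C D E \<Longrightarrow> pentagon_vertices L U B C D E A"
  unfolding pentagon_vertices_def by (auto simp: adjacent_commute)

lemma pentagon_vertices_reflect:
  "pentagon_vertices L U A B C D E \<Longrightarrow> pentagon_vertices L U A E D C B"
  unfolding pentagon_vertices_def by (auto simp: adjacent_commute join_commute)

lemma pentagon_vertices_rotate_to:
  assumes p: "pentagon_vertices L U A B C D E" and V: "V \<in> {A, B, C, D, E}"
  obtains B' C' D' E' where "pentagon_vertices L U V B' C' D' E'"
    "{V, B', C', D', E'} = {A, B, C, D, E}"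
proof -
  note r1 = pentagon_vertices_rotate[OF p]
  note r2 = pentagon_vertices_rotate[OF r1]
  note r3 = pentagon_vertices_rotate[OF r2]
  note r4 = pentagon_vertices_rotate[OF r3]
  from V consider "V = A" | "V = B" | "V = C" | "V = D" | "V = E"
    by blast
  then show ?thesis
  proof cases
    case 1
    then show ?thesis using that[of B C D E] p by simp
  next
    case 2
    then show ?thesis using that[of C D E A] r1 by auto
  next
    case 3
    then show ?thesis using that[of D E A B] r2 by auto
  next
    case 4
    then show ?thesis using that[of E A B C] r3 by auto
  next
    case 5
    then show ?thesis using that[of A B C D] r4 by auto
  qed
qed

lemma pentagon_vertices_rotate_to_side:
  assumes p: "pentagon_vertices L U A B C D E" and PQ: "{P, Q} \<subseteq> {A, B, C, D, E}" "adjacent L P Q"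
  obtains C' D' E' where "pentagon_vertices L U P Q C' D' E'"
proof -
  have "P \<in> {A, B, C, D, E}"
    using PQ(1) by simp
  then obtain B' C' D' E' where p': "pentagon_vertices L U P B' C' D' E'"
    and eq: "{P, B', C', D', E'} = {A, B, C, D, E}"
    by (rule pentagon_vertices_rotate_to[OF p])
  have "Q \<in> {P, B', C', D', E'}"
    unfolding eq using PQ(1) by simp
  moreover have "\<not> adjacent L P C'" "\<not> adjacent L P D'"
    using p' by (simp_all add: pentagon_vertices_def)
  then have "Q \<noteq> P" "Q \<noteq> C'" "Q \<noteq> D'"
    using PQ(2) by (auto simp: adjacent_def)
  ultimately have "Q = B' \<or> Q = E'"
    by simp
  then show ?thesis
  proof
    assume "Q = B'"
    then show ?thesis
      using that p' by simp
  next
    assume "Q = E'"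
    then show ?thesis
      using that pentagon_vertices_reflect[OF p'] by simp
  qed
qed

lemma is_point_if_vertex:
  assumes "pentagon_vertices L U A B C D E" "V \<in> {A, B, C, D, E}"
  shows "is_point V"
proof -
  have "adjacent L A B" "adjacent L C D" "adjacent L E A"
    using assms(1) by (simp_all add: pentagon_vertices_def)
  then show ?thesis
    using assms(2) by (auto simp: adjacent_def)
qed

definition on_common_pentagon ::
    "('a::field ^ 'n) set set \<Rightarrow> ('a ^ 'n) set \<Rightarrow> ('a ^ 'n) set set \<Rightarrow> bool" where
  "on_common_pentagon L U S \<longleftrightarrow>
     (\<exists>A B C D E. pentagon_vertices L U A B C D E \<and> S \<subseteq> {A, B, C, D, E})"

lemma on_common_pentagon_mono:
  "S \<subseteq> T \<Longrightarrow> on_common_pentagon L U T \<Longrightarrow> on_common_pentagon L U S"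
  unfolding on_common_pentagon_def by (meson order_trans)

lemma on_common_pentagonI:
  "pentagon_vertices L U A B C D E \<Longrightarrow> S \<subseteq> {A, B, C, D, E} \<Longrightarrow> on_common_pentagon L U S"
  unfolding on_common_pentagon_def by (intro exI conjI)

context good_lines
begin

lemma pentagon_vertices_off_side:
  assumes p: "pentagon_vertices L U A B C D E"
  shows "\<not> C \<subseteq> join A B" "\<not> D \<subseteq> join A B" "\<not> E \<subseteq> join A B"
proof -
  have AB: "adjacent L A B"
    using p by (simp add: pentagon_vertices_def)
  have points: "is_point C" "is_point D" "is_point E"
    using is_point_if_vertex[OF p] by simp_all
  have "\<not> adjacent L C A" "\<not> adjacent L D A" "\<not> adjacent L E B"
    using p adjacent_commute unfolding pentagon_vertices_def by metis+
  moreover have "C \<noteq> A" "D \<noteq> A" "E \<noteq> B"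
    using p by (auto simp: pentagon_vertices_def)
  ultimately show "\<not> C \<subseteq> join A B" "\<not> D \<subseteq> join A B" "\<not> E \<subseteq> join A B"
    using adjacent_if_on_line[OF AB points(1)] adjacent_if_on_line[OF AB points(2)]
      adjacent_if_on_line[OF adjacent_sym[OF AB] points(3)] join_commute[of B A] by auto
qed

lemma qU_point_if_vertex:
  assumes U: "vec.subspace U" and p: "pentagon_vertices L U A B C D E" and V: "V \<in> {A, B, C, D, E}"
  shows "qU_point q L U V"
proof -
  obtain B' C' D' E' where p': "pentagon_vertices L U V B' C' D' E'"
    using pentagon_vertices_rotate_to[OF p V] .
  then have adj: "adjacent L V B'" "adjacent L V E'" and "join V B' \<subseteq> U" "join V E' \<subseteq> U"
    using adjacent_sym[of L E' V] join_commute[of E' V] by (simp_all add: pentagon_vertices_def)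
  moreover have "join V B' \<noteq> join V E'"
    using pentagon_vertices_off_side(3)[OF p'] subset_join2[of E' V] by auto
  ultimately show ?thesis
    using qU_point_if_two_lines[OF U is_point_if_vertex[OF p', of V]
        join_mem_lines_through_if_adjacent[OF adj(1)] join_mem_lines_through_if_adjacent[OF adj(2)]]
    by simp
qed

lemma pentagon_vertices_sides_distinct:
  assumes "pentagon_vertices L U A B C D E"
  shows "join A B \<noteq> join B C" "join A B \<noteq> join C D" "join A B \<noteq> join D E"
    "join A B \<noteq> join E A"
proof -
  note off = pentagon_vertices_off_side[OF assms]
  show "join A B \<noteq> join B C"
    using off(1) subset_join2[of C B] by metis
  show "join A B \<noteq> join C D"
    using off(1) subset_join1[of C D] by metis
  show "join A B \<noteq> join D E"
    using off(2) subset_join1[of D E] by metis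
  show "join A B \<noteq> join E A"
    using off(3) subset_join1[of E A] by metis
qed

lemma not_adjacent_if_sides_distinct:
  "adjacent L X Y \<Longrightarrow> adjacent L Y Z \<Longrightarrow> join X Y \<noteq> join Y Z \<Longrightarrow> \<not> adjacent L X Z"
  using join_eq_if_adjacent_triangle by blast

lemma pentagon_vertices_of_pentagon_in:
  assumes "pentagon_in L U F"
  shows "pentagon_vertices L U (F 0) (F 1) (F 2) (F 3) (F 4)"
proof -
  have points: "\<forall>i<5. is_point (F i)" and inj: "inj_on F {..<5}"
    and in_L: "\<forall>i<5. join (F i) (F (Suc i mod 5)) \<in> L"
    and inj_sides: "inj_on (\<lambda>i. join (F i) (F (Suc i mod 5))) {..<5}"
    and in_U: "\<forall>i<5. join (F i) (F (Suc i mod 5)) \<subseteq> U"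
    using assms unfolding pentagon_in_def pentagon_def by blast+
  have distinct: "distinct [F 0, F 1, F 2, F 3, F 4]"
    using inj unfolding lessThan_5 inj_on_def by auto
  have "join (F 0) (F 1) \<in> L" "join (F 1) (F 2) \<in> L" "join (F 2) (F 3) \<in> L"
    "join (F 3) (F 4) \<in> L" "join (F 4) (F 0) \<in> L"
    using in_L[rule_format, of 0] in_L[rule_format, of 1] in_L[rule_format, of 2]
      in_L[rule_format, of 3] in_L[rule_format, of 4] by (simp_all add: numeral_2_eq_2)
  then have sides: "adjacent L (F 0) (F 1)" "adjacent L (F 1) (F 2)" "adjacent L (F 2) (F 3)"
    "adjacent L (F 3) (F 4)" "adjacent L (F 4) (F 0)"
    using points distinct unfolding all_less_5 adjacent_def
    by (simp_all add: eq_commute[of "F 4" "F 0"])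
  have "join (F 0) (F 1) \<noteq> join (F 1) (F 2)" "join (F 1) (F 2) \<noteq> join (F 2) (F 3)"
    "join (F 2) (F 3) \<noteq> join (F 3) (F 4)" "join (F 3) (F 4) \<noteq> join (F 4) (F 0)"
    "join (F 4) (F 0) \<noteq> join (F 0) (F 1)"
    using inj_on_contraD[OF inj_sides, of 0 1] inj_on_contraD[OF inj_sides, of 1 2]
      inj_on_contraD[OF inj_sides, of 2 3] inj_on_contraD[OF inj_sides, of 3 4]
      inj_on_contraD[OF inj_sides, of 4 0]
    by (simp_all add: numeral_2_eq_2)
  then have "\<not> adjacent L (F 0) (F 2)" "\<not> adjacent L (F 1) (F 3)" "\<not> adjacent L (F 2) (F 4)"
    "\<not> adjacent L (F 0) (F 3)" "\<not> adjacent L (F 1) (F 4)"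
    using not_adjacent_if_sides_distinct sides adjacent_sym by blast+
  moreover have "join (F 0) (F 1) \<subseteq> U" "join (F 1) (F 2) \<subseteq> U" "join (F 2) (F 3) \<subseteq> U"
    "join (F 3) (F 4) \<subseteq> U" "join (F 4) (F 0) \<subseteq> U"
    using in_U[rule_format, of 0] in_U[rule_format, of 1] in_U[rule_format, of 2]
      in_U[rule_format, of 3] in_U[rule_format, of 4] by (simp_all add: numeral_2_eq_2)
  ultimately show ?thesis
    using distinct sides unfolding pentagon_vertices_def by simp
qed

lemma ex_pentagon_in_if_pentagon_vertices:
  assumes p: "pentagon_vertices L U A B C D E"
  shows "\<exists>F. pentagon_in L U F \<and> (\<forall>X\<in>{A, B, C, D, E}. is_vertex X F)"
proof -
  define F where "F = (!) [A, B, C, D, E]"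
  have sides: "adjacent L A B" "adjacent L B C" "adjacent L C D" "adjacent L D E" "adjacent L E A"
    and in_U: "join A B \<subseteq> U" "join B C \<subseteq> U" "join C D \<subseteq> U" "join D E \<subseteq> U" "join E A \<subseteq> U"
    using p by (simp_all add: pentagon_vertices_def)
  note r1 = pentagon_vertices_rotate[OF p]
  note r2 = pentagon_vertices_rotate[OF r1]
  note r3 = pentagon_vertices_rotate[OF r2]
  have ne: "join A B \<noteq> join B C" "join A B \<noteq> join C D" "join A B \<noteq> join D E"
    "join A B \<noteq> join E A" "join B C \<noteq> join C D" "join B C \<noteq> join D E" "join B C \<noteq> join E A"
    "join C D \<noteq> join D E" "join C D \<noteq> join E A" "join D E \<noteq> join E A"
    using pentagon_vertices_sides_distinct[OF p] pentagon_vertices_sides_distinct[OF r1]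
      pentagon_vertices_sides_distinct[OF r2] pentagon_vertices_sides_distinct[OF r3]
    by simp_all
  have "\<forall>i<5. is_point (F i)"
    unfolding all_less_5 using is_point_if_vertex[OF p] by (simp add: F_def)
  moreover have "inj_on F {..<5}"
    unfolding F_def using p by (intro inj_on_nth) (simp_all add: pentagon_vertices_def)
  moreover have "\<forall>i<5. join (F i) (F (Suc i mod 5)) \<in> L"
    using sides unfolding all_less_5 adjacent_def by (simp add: F_def)
  moreover have "inj_on (\<lambda>i. join (F i) (F (Suc i mod 5))) {..<5}"
    using ne ne[THEN not_sym] unfolding lessThan_5 inj_on_def by (simp add: F_def)
  moreover have "\<forall>i<5. join (F i) (F (Suc i mod 5)) \<subseteq> U"
    using in_U unfolding all_less_5 by (simp add: F_def)
  ultimately have "pentagon_in L U F"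
    unfolding pentagon_in_def pentagon_def by (intro conjI)
  moreover have "\<forall>X\<in>{A, B, C, D, E}. is_vertex X F"
    by (simp add: is_vertex_iff F_def)
  ultimately show ?thesis
    by blast
qed

lemma ex_pentagon_in_if_on_common_pentagon:
  assumes "on_common_pentagon L U S"
  shows "\<exists>F. pentagon_in L U F \<and> (\<forall>X\<in>S. is_vertex X F)"
proof -
  obtain A B C D E where p: "pentagon_vertices L U A B C D E" and S: "S \<subseteq> {A, B, C, D, E}"
    using assms unfolding on_common_pentagon_def by auto
  obtain F where "pentagon_in L U F" "\<forall>X\<in>{A, B, C, D, E}. is_vertex X F"
    using ex_pentagon_in_if_pentagon_vertices[OF p] by blast
  with S show ?thesis
    by auto
qed

end

section \<open>Pentagons in a 4-space\<close>

locale good_lines_in_4space = good_lines L q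
  for L :: "('a::{field,finite} ^ 'n) set set" and q +
  fixes U :: "('a ^ 'n) set"
  assumes U4: "proj_subspace 4 U"
begin

lemma subspace_U: "vec.subspace U"
  using U4 by (simp add: proj_subspace_def)

text \<open>In the 4-space \<open>U\<close> the planes \<open>pi_of L P\<close> and \<open>pi_of L Q\<close> meet.\<close>

lemma ex_common_neighbour:
  assumes P: "qU_point q L U P" and Q: "qU_point q L U Q" and "P \<noteq> Q" "\<not> adjacent L P Q"
  obtains X where "adjacent L P X" "adjacent L Q X"
proof -
  have P': "is_point P" "lines_through L P \<noteq> {}" and Q': "is_point Q" "lines_through L Q \<noteq> {}"
    using P Q by (auto simp: qU_point_iff)
  have planes: "is_plane (pi_of L P)" "is_plane (pi_of L Q)"
    using is_plane_pi_of P' Q' by auto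
  then obtain X where X: "is_point X" "X \<subseteq> pi_of L P" "X \<subseteq> pi_of L Q"
    using ex_point_in_inter[OF _ _ subspace_U pi_of_subset_if_qU_point[OF subspace_U P]
        pi_of_subset_if_qU_point[OF subspace_U Q]] U4
    by (auto simp: proj_subspace_def)
  have "X \<noteq> P"
    using adjacent_if_in_pi_of[OF Q' P'(1)] X(3) assms(3,4) adjacent_sym by blast
  moreover have "X \<noteq> Q"
    using adjacent_if_in_pi_of[OF P' Q'(1)] X(2) assms(3,4) by blast
  ultimately show ?thesis
    using that adjacent_if_in_pi_of[OF P' X(1,2)] adjacent_if_in_pi_of[OF Q' X(1,3)] by blast
qed

lemma pentagon_vertices_replace:
  assumes p: "pentagon_vertices L U A B C D E"
    and P: "qU_point q L U P" "adjacent L P A" "P \<notin> {A, B, C, D, E}" "\<not> P \<subseteq> join A E"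
  obtains X where "pentagon_vertices L U A P X D E"
proof -
  have EA: "adjacent L E A" and DE: "adjacent L D E" and AD: "\<not> adjacent L A D" "A \<noteq> D"
    and in_U: "join D E \<subseteq> U" "join E A \<subseteq> U" and "A \<noteq> E" "D \<noteq> E"
    using p by (simp_all add: pentagon_vertices_def)
  note AE = adjacent_sym[OF EA] and ED = adjacent_sym[OF DE]
  have qA: "qU_point q L U A" and qD: "qU_point q L U D"
    using qU_point_if_vertex[OF subspace_U p] by simp_all
  have "A \<noteq> P" "P \<noteq> D" "P \<noteq> E"
    using P(3) by auto
  have PE: "\<not> adjacent L P E"
    using adjacent_triangle_collinear[OF P(2) AE] P(4) by blast
  have PD: "\<not> adjacent L P D"
  proof
    assume "adjacent L P D"
    then show False
      using no_quadrangle[OF P(2) AE ED adjacent_sym _ AD(2) PE] \<open>P \<noteq> E\<close> by blast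
  qed
  obtain X where PX: "adjacent L P X" and DX: "adjacent L D X"
    using ex_common_neighbour[OF P(1) qD \<open>P \<noteq> D\<close> PD] .
  note XD = adjacent_sym[OF DX]
  have "A \<noteq> X"
    using DX AD(1) adjacent_sym by blast
  have "X \<noteq> E"
    using PX PE by blast
  have "P \<noteq> X" "X \<noteq> D"
    using PX DX by (auto simp: adjacent_def)
  have XE: "\<not> adjacent L X E" and AX: "\<not> adjacent L A X"
    using quadrangle_chords_not_adjacent[OF P(2) AE ED PX DX PE \<open>P \<noteq> E\<close> AD(2) \<open>A \<noteq> X\<close> \<open>X \<noteq> E\<close>]
    by simp_all
  have "join A P \<subseteq> U" "join P X \<subseteq> U" "join X D \<subseteq> U"
    using join_subset_if_qU_point[OF qA adjacent_sym[OF P(2)]] join_subset_if_qU_point[OF P(1) PX]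
      join_subset_if_qU_point[OF qD DX] join_commute[of X D] by simp_all
  then have "pentagon_vertices L U A P X D E"
    unfolding pentagon_vertices_def
    using \<open>A \<noteq> P\<close> \<open>A \<noteq> X\<close> AD \<open>A \<noteq> E\<close> \<open>P \<noteq> X\<close> \<open>P \<noteq> D\<close> \<open>P \<noteq> E\<close> \<open>X \<noteq> D\<close>
      \<open>X \<noteq> E\<close> \<open>D \<noteq> E\<close> adjacent_sym[OF P(2)] PX XD DE EA AX PD PE XE in_U
    by simp
  then show ?thesis
    by (rule that)
qed


lemma on_common_pentagon_if_adjacent_to_first:
  assumes p: "pentagon_vertices L U A B C D E" and P: "qU_point q L U P" "adjacent L P A"
  shows "on_common_pentagon L U {P, A}"
proof (cases "P \<in> {A, B, C, D, E}")
  case True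
  then show ?thesis
    using on_common_pentagonI[OF p] by simp
next
  case new: False
  show ?thesis
  proof (cases "P \<subseteq> join A E")
    case False
    then obtain X where "pentagon_vertices L U A P X D E"
      using pentagon_vertices_replace[OF p P new] by blast
    then show ?thesis
      by (rule on_common_pentagonI) auto
  next
    case True
    have "\<not> P \<subseteq> join A B"
    proof
      assume on_AB: "P \<subseteq> join A B"
      have "adjacent L A B" "adjacent L E A"
        using p by (simp_all add: pentagon_vertices_def)
      then have lines: "is_line (join A B)" "is_line (join A E)" and "is_point A"
        using is_line_if_mem join_commute[of E A] by (auto simp: adjacent_def)
      moreover have "is_point P" "P \<noteq> A"
        using P(2) by (auto simp: adjacent_def)
      ultimately have "join P A = join A B" "join P A = join A E"
        using join_points_eq_line[OF lines(1) _ _ _ on_AB subset_join1]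
          join_points_eq_line[OF lines(2) _ _ _ True subset_join1] by simp_all
      then show False
        using pentagon_vertices_off_side(3)[OF p] subset_join2[of E A] by simp
    qed
    moreover have "P \<notin> {A, E, D, C, B}"
      using new by auto
    ultimately obtain X where "pentagon_vertices L U A P X C B"
      using pentagon_vertices_replace[OF pentagon_vertices_reflect[OF p] P(1,2)] by blast
    then show ?thesis
      by (rule on_common_pentagonI) auto
  qed
qed

lemma on_common_pentagon_if_adjacent:
  assumes p: "pentagon_vertices L U A B C D E" and V: "V \<in> {A, B, C, D, E}"
    and P: "qU_point q L U P" "adjacent L P V"
  shows "on_common_pentagon L U {P, V}"
proof -
  obtain B' C' D' E' where "pentagon_vertices L U V B' C' D' E'"
    using pentagon_vertices_rotate_to[OF p V] .
  then show ?thesis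
    using on_common_pentagon_if_adjacent_to_first[OF _ P] by simp
qed

text \<open>If \<open>P\<close> is not adjacent to a vertex \<open>A\<close>, pass through a common neighbour of \<open>P\<close>
  and \<open>A\<close>, which is again a \<open>(q+1)\<close>-\<open>U\<close>-point.\<close>

lemma on_common_pentagon_single:
  assumes p: "pentagon_vertices L U A B C D E" and P: "qU_point q L U P"
  shows "on_common_pentagon L U {P}"
proof -
  have qA: "qU_point q L U A"
    using qU_point_if_vertex[OF subspace_U p] by simp
  consider "P = A" | "adjacent L P A" | "P \<noteq> A" "\<not> adjacent L P A"
    by blast
  then show ?thesis
  proof cases
    case 1
    then show ?thesis
      using on_common_pentagonI[OF p] by simp
  next
    case 2
    have "on_common_pentagon L U {P, A}"
      using on_common_pentagon_if_adjacent[OF p _ P 2] by simp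
    then show ?thesis
      by (rule on_common_pentagon_mono[rotated]) simp
  next
    case 3
    obtain X where PX: "adjacent L P X" and AX: "adjacent L A X"
      using ex_common_neighbour[OF P qA 3] .
    have qX: "qU_point q L U X"
      using qU_point_if_common_neighbour[OF subspace_U P qA 3 PX AX] .
    obtain A' B' C' D' E' where p': "pentagon_vertices L U A' B' C' D' E'" "{X, A} \<subseteq> {A', B', C', D', E'}"
      using on_common_pentagon_if_adjacent[OF p _ qX adjacent_sym[OF AX]] unfolding on_common_pentagon_def by auto
    then have "on_common_pentagon L U {P, X}"
      using on_common_pentagon_if_adjacent[OF p'(1) _ P PX] by simp
    then show ?thesis
      by (rule on_common_pentagon_mono[rotated]) simp
  qed
qed

lemma on_common_pentagon_triple:
  assumes p: "pentagon_vertices L U A B C D E"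
    and P: "qU_point q L U P" and Q: "qU_point q L U Q" and R: "qU_point q L U R"
    and ne: "P \<noteq> Q" "P \<noteq> R" and in_pi: "Q \<subseteq> pi_of L P" "R \<subseteq> pi_of L P"
    and R_off: "R = Q \<or> \<not> R \<subseteq> join P Q"
  shows "on_common_pentagon L U {P, Q, R}"
proof -
  have P': "is_point P" "lines_through L P \<noteq> {}"
    using P by (simp_all add: qU_point_iff)
  have PQ: "adjacent L P Q" and PR: "adjacent L P R"
    using adjacent_if_in_pi_of[OF P'] in_pi ne Q R by (auto simp: qU_point_iff)
  obtain A1 B1 C1 D1 E1 where p1: "pentagon_vertices L U A1 B1 C1 D1 E1" "P \<in> {A1, B1, C1, D1, E1}"
    using on_common_pentagon_single[OF p P] unfolding on_common_pentagon_def by auto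
  obtain A2 B2 C2 D2 E2 where p2: "pentagon_vertices L U A2 B2 C2 D2 E2"
    "{Q, P} \<subseteq> {A2, B2, C2, D2, E2}"
    using on_common_pentagon_if_adjacent[OF p1 Q adjacent_sym[OF PQ]]
    unfolding on_common_pentagon_def by auto
  obtain C4 D4 E4 where p4: "pentagon_vertices L U P Q C4 D4 E4"
    by (rule pentagon_vertices_rotate_to_side[OF p2(1) _ PQ]) (use p2(2) in auto)
  show ?thesis
  proof (cases "R \<in> {P, Q, C4, D4, E4}")
    case True
    then show ?thesis
      using on_common_pentagonI[OF p4] by simp
  next
    case False
    then have "R \<notin> {P, E4, D4, C4, Q}" "\<not> R \<subseteq> join P Q"
      using R_off by auto
    then obtain X where "pentagon_vertices L U P R X C4 Q"
      using pentagon_vertices_replace[OF pentagon_vertices_reflect[OF p4] R adjacent_sym[OF PR]]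
      by blast
    then show ?thesis
      by (rule on_common_pentagonI) auto
  qed
qed

end

theorem lemma7:
  fixes L :: "('a::{field,finite} ^ 'n) set set" and U :: "('a ^ 'n) set" and q :: nat
  assumes q_def: "q = CARD('a)"
    and nonempty: "L \<noteq> {}"
    and good: "good_line_set q L"
    and U4: "proj_subspace 4 U"
    and Upent: "\<exists>P5. pentagon_in L U P5"
  shows
    "(\<forall>P V P5. qU_point q L U P \<and> pentagon_in L U P5 \<and> is_vertex V P5 \<and> P \<noteq> V
         \<and> join P V \<in> L \<longrightarrow>
         (\<exists>P5'. pentagon_in L U P5' \<and> is_vertex P P5' \<and> is_vertex V P5'))
   \<and> (\<forall>P. qU_point q L U P \<longrightarrow> (\<exists>P5. pentagon_in L U P5 \<and> is_vertex P P5))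
   \<and> (\<forall>P Q R. qU_point q L U P \<and> qU_point q L U Q \<and> qU_point q L U R
         \<and> P \<noteq> Q \<and> P \<noteq> R \<and> Q \<subseteq> pi_of L P \<and> R \<subseteq> pi_of L P
         \<and> (R = Q \<or> \<not> R \<subseteq> join P Q) \<longrightarrow>
         (\<exists>P5. pentagon_in L U P5 \<and> is_vertex P P5 \<and> is_vertex Q P5 \<and> is_vertex R P5))"
proof -
  interpret good_lines_in_4space L q U
    using q_def good U4 by unfold_locales
  obtain F0 where "pentagon_in L U F0"
    using Upent by blast
  note p0 = pentagon_vertices_of_pentagon_in[OF this]
  have "\<exists>P5'. pentagon_in L U P5' \<and> is_vertex P P5' \<and> is_vertex V P5'"
    if P: "qU_point q L U P" and F: "pentagon_in L U F" and V: "is_vertex V F" "P \<noteq> V" "join P V \<in> L"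
    for P V F
  proof -
    note p = pentagon_vertices_of_pentagon_in[OF F]
    have V': "V \<in> {F 0, F 1, F 2, F 3, F 4}"
      using V(1) by (simp add: is_vertex_iff)
    then have "adjacent L P V"
      using is_point_if_vertex[OF p] P V(2,3) by (simp add: adjacent_def qU_point_iff)
    then show ?thesis
      using ex_pentagon_in_if_on_common_pentagon[OF on_common_pentagon_if_adjacent[OF p V' P]] by simp
  qed
  moreover have "\<exists>P5. pentagon_in L U P5 \<and> is_vertex P P5" if "qU_point q L U P" for P
    using ex_pentagon_in_if_on_common_pentagon[OF on_common_pentagon_single[OF p0 that]] by simp
  moreover have "\<exists>P5. pentagon_in L U P5 \<and> is_vertex P P5 \<and> is_vertex Q P5 \<and> is_vertex R P5"
    if "qU_point q L U P" "qU_point q L U Q" "qU_point q L U R" "P \<noteq> Q" "P \<noteq> R"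
      "Q \<subseteq> pi_of L P" "R \<subseteq> pi_of L P" "R = Q \<or> \<not> R \<subseteq> join P Q" for P Q R
    using ex_pentagon_in_if_on_common_pentagon[OF on_common_pentagon_triple[OF p0 that]] by simp
  ultimately show ?thesis
    by blast
qed

end
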